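(* Let $C$ be an octonion algebra over a field $k$ with $\mathrm{char}(k)\neq2$, and $G=\mathrm{Aut}(C)$. Let $s,t\in G(k)$ be elements of order $2$, and let $D$ (resp. $D'$) be the quaternion subalgebra of $C$ fixed elementwise by $t$ (resp. $s$). Then $s$ and $t$ are conjugate in $G(k)$ if and only if $D\cong D'$ as $k$-algebras.
   Context: An octonion algebra is an $8$-dimensional composition algebra, i.e. a unital $k$-algebra with a nondegenerate multiplicative quadratic form $N$. A quaternion subalgebra is a $4$-dimensional composition subalgebra containing the identity. Every element of order $2$ in $\mathrm{Aut}(C)$ fixes elementwise exactly a quaternion subalgebra $D$ (its $+1$-eigenspace) and acts by $-1$ on $D^\perp$. *)

theory Defs
  imports Complex_Main
begin

text \<open>An algebra over a field 'k is given by a carrier type 'c (an abelian group),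
 a scalar multiplication scale, a (not necessarily associative) product mult.\<close>

definition polar :: "('c::ab_group_add \<Rightarrow> 'k::field) \<Rightarrow> 'c \<Rightarrow> 'c \<Rightarrow> 'k" where
  "polar N x y = N (x + y) - N x - N y"

definition quadratic_form :: "('k::field \<Rightarrow> 'c::ab_group_add \<Rightarrow> 'c) \<Rightarrow> ('c \<Rightarrow> 'k) \<Rightarrow> bool" where
  "quadratic_form scale N \<longleftrightarrow>
     (\<forall>a x. N (scale a x) = a * a * N x) \<and>
     (\<forall>y. Vector_Spaces.linear scale (*) (\<lambda>x. polar N x y)) \<and>
     (\<forall>x. Vector_Spaces.linear scale (*) (\<lambda>y. polar N x y))"

definition nondegenerate :: "('c::ab_group_add \<Rightarrow> 'k::field) \<Rightarrow> bool" where
  "nondegenerate N \<longleftrightarrow> (\<forall>x. (\<forall>y. polar N x y = 0) \<longrightarrow> x = 0)"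

definition unital_algebra ::
  "('k::field \<Rightarrow> 'c::ab_group_add \<Rightarrow> 'c) \<Rightarrow> ('c \<Rightarrow> 'c \<Rightarrow> 'c) \<Rightarrow> 'c \<Rightarrow> bool" where
  "unital_algebra scale mult e \<longleftrightarrow>
     vector_space scale \<and>
     (\<forall>x. Vector_Spaces.linear scale scale (mult x)) \<and>
     (\<forall>y. Vector_Spaces.linear scale scale (\<lambda>x. mult x y)) \<and>
     (\<forall>x. mult e x = x \<and> mult x e = x)"

definition octonion_algebra ::
  "('k::field \<Rightarrow> 'c::ab_group_add \<Rightarrow> 'c) \<Rightarrow> ('c \<Rightarrow> 'c \<Rightarrow> 'c) \<Rightarrow> 'c \<Rightarrow> ('c \<Rightarrow> 'k) \<Rightarrow> bool" where
  "octonion_algebra scale mult e N \<longleftrightarrow>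
     unital_algebra scale mult e \<and>
     vector_space.dim scale (UNIV :: 'c set) = 8 \<and>
     quadratic_form scale N \<and> nondegenerate N \<and>
     (\<forall>x y. N (mult x y) = N x * N y)"

text \<open>k-points of the automorphism group scheme Aut(C).\<close>
definition is_aut ::
  "('k::field \<Rightarrow> 'c::ab_group_add \<Rightarrow> 'c) \<Rightarrow> ('c \<Rightarrow> 'c \<Rightarrow> 'c) \<Rightarrow> ('c \<Rightarrow> 'c) \<Rightarrow> bool" where
  "is_aut scale mult g \<longleftrightarrow> bij g \<and> Vector_Spaces.linear scale scale g \<and>
     (\<forall>x y. g (mult x y) = mult (g x) (g y))"

definition order_two :: "('c \<Rightarrow> 'c) \<Rightarrow> bool" where
  "order_two g \<longleftrightarrow> g \<circ> g = id \<and> g \<noteq> id"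

definition fixed_subalgebra :: "('c \<Rightarrow> 'c) \<Rightarrow> 'c set" where
  "fixed_subalgebra g = {x. g x = x}"

definition alg_iso_on ::
  "('k::field \<Rightarrow> 'c::ab_group_add \<Rightarrow> 'c) \<Rightarrow> ('c \<Rightarrow> 'c \<Rightarrow> 'c) \<Rightarrow> 'c \<Rightarrow> 'c set \<Rightarrow> 'c set \<Rightarrow> ('c \<Rightarrow> 'c) \<Rightarrow> bool" where
  "alg_iso_on scale mult e A B f \<longleftrightarrow> bij_betw f A B \<and>
     (\<forall>x\<in>A. \<forall>y\<in>A. f (x + y) = f x + f y) \<and>
     (\<forall>a. \<forall>x\<in>A. f (scale a x) = scale a (f x)) \<and>
     (\<forall>x\<in>A. \<forall>y\<in>A. f (mult x y) = mult (f x) (f y)) \<and>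
     f e = e"

end

theory Submission
  imports Defs
begin

(* An automorphism t of order 2 splits C = D \<oplus> W into its (+1)- and
   (-1)-eigenspaces; D is the fixed subalgebra, D \<bottom> W, and W contains a vector a
   with N a \<noteq> 0.  Then C = D \<oplus> D a (the Cayley-Dickson doubling of D), and the
   product of p + q a and u + v a is given by an explicit formula that only
   involves the multiplication of D and the scalar N a.  Hence, if s is a second
   involution with fixed algebra D' and a' \<in> W' satisfies N a' = N a, every algebra
   isomorphism f : D \<rightarrow> D' extends to the automorphism p + q a \<mapsto> f p + f q a' of C,
   which conjugates t into s.  A dimension count (dim W, dim W' \<ge> 4 inside the at most
   7-dimensional space of trace-zero vectors) shows W \<inter> W' \<noteq> 0, and from a common
   vector of W \<inter> W' one produces the required a and a'.  The converse direction
   (conjugate involutions have isomorphic fixed algebras) is elementary. *)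

(* A unital algebra with a nondegenerate multiplicative quadratic form N over a
   field of characteristic \<noteq> 2; no finiteness of the dimension is assumed. *)
locale composition_algebra =
  fixes scale :: "'k::field \<Rightarrow> 'c::ab_group_add \<Rightarrow> 'c" (infixr "\<star>" 75)
    and mult :: "'c \<Rightarrow> 'c \<Rightarrow> 'c" (infixl "\<odot>" 70)
    and e :: 'c and N :: "'c \<Rightarrow> 'k"
  assumes is_vector_space: "vector_space scale"
    and mult_linear_right: "\<And>x. Vector_Spaces.linear scale scale (mult x)"
    and mult_linear_left: "\<And>y. Vector_Spaces.linear scale scale (\<lambda>x. mult x y)"
    and unit_left [simp]: "\<And>x. e \<odot> x = x" and unit_right [simp]: "\<And>x. x \<odot> e = x"
    and is_quadratic_form: "quadratic_form scale N"
    and is_nondegenerate: "nondegenerate N"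
    and norm_mult: "\<And>x y. N (x \<odot> y) = N x * N y"
    and two_nonzero: "(2::'k) \<noteq> 0"
    and nontrivial: "\<exists>x::'c. x \<noteq> 0"
begin

sublocale V: vector_space scale by (rule is_vector_space)

lemma mult_hom_right: "module_hom scale scale (mult x)"
  using module_hom_linearI[OF mult_linear_right] .
lemma mult_hom_left: "module_hom scale scale (\<lambda>x. x \<odot> y)"
  using module_hom_linearI[OF mult_linear_left] .

lemma mult_add_right [simp]: "x \<odot> (y + z) = x \<odot> y + x \<odot> z"
  using module_hom.add[OF mult_hom_right] .
lemma mult_add_left [simp]: "(y + z) \<odot> x = y \<odot> x + z \<odot> x"
  using module_hom.add[OF mult_hom_left] by simp
lemma mult_scale_right [simp]: "x \<odot> (c \<star> y) = c \<star> (x \<odot> y)"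
  using module_hom.scale[OF mult_hom_right] .
lemma mult_scale_left [simp]: "(c \<star> y) \<odot> x = c \<star> (y \<odot> x)"
  using module_hom.scale[OF mult_hom_left] by simp
lemma mult_zero_right [simp]: "x \<odot> 0 = 0"
  using module_hom.zero[OF mult_hom_right] .
lemma mult_zero_left [simp]: "0 \<odot> x = 0"
  using module_hom.zero[OF mult_hom_left] by simp
lemma mult_neg_right [simp]: "x \<odot> (- y) = - (x \<odot> y)"
  using module_hom.neg[OF mult_hom_right] .
lemma mult_neg_left [simp]: "(- y) \<odot> x = - (y \<odot> x)"
  using module_hom.neg[OF mult_hom_left] by simp
lemma mult_diff_right [simp]: "x \<odot> (y - z) = x \<odot> y - x \<odot> z"
  using module_hom.diff[OF mult_hom_right] .
lemma mult_diff_left [simp]: "(y - z) \<odot> x = y \<odot> x - z \<odot> x"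
  using module_hom.diff[OF mult_hom_left] by simp

lemma scale_two: "y + y = (2::'k) \<star> y"
  by (metis V.scale_left_distrib V.scale_one one_add_one)

lemma half_double: "(1/2::'k) \<star> (y + y) = y"
  using two_nonzero by (simp add: scale_two)

lemma scale_two_cancel: "(2::'k) \<star> x = 2 \<star> y \<Longrightarrow> x = y"
  using two_nonzero by simp

abbreviation b :: "'c \<Rightarrow> 'c \<Rightarrow> 'k" where "b \<equiv> polar N"

lemma norm_scale [simp]: "N (c \<star> x) = c * c * N x"
  using is_quadratic_form unfolding quadratic_form_def by blast

lemma b_hom_left: "module_hom scale (*) (\<lambda>x. b x y)"
  using is_quadratic_form unfolding quadratic_form_def by (blast intro: module_hom_linearI)
lemma b_hom_right: "module_hom scale (*) (\<lambda>y. b x y)"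
  using is_quadratic_form unfolding quadratic_form_def by (blast intro: module_hom_linearI)

lemma b_add_left [simp]: "b (x + x') y = b x y + b x' y"
  using module_hom.add[OF b_hom_left] by simp
lemma b_add_right [simp]: "b y (x + x') = b y x + b y x'"
  using module_hom.add[OF b_hom_right] by simp
lemma b_scale_left [simp]: "b (c \<star> x) y = c * b x y"
  using module_hom.scale[OF b_hom_left] by simp
lemma b_scale_right [simp]: "b y (c \<star> x) = c * b y x"
  using module_hom.scale[OF b_hom_right] by simp
lemma b_zero_left [simp]: "b 0 y = 0"
  using module_hom.zero[OF b_hom_left] by simp
lemma b_zero_right [simp]: "b y 0 = 0"
  using module_hom.zero[OF b_hom_right] by simp
lemma b_neg_left [simp]: "b (- x) y = - b x y"
  using module_hom.neg[OF b_hom_left] by simp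
lemma b_neg_right [simp]: "b y (- x) = - b y x"
  using module_hom.neg[OF b_hom_right] by simp
lemma b_diff_left [simp]: "b (x - x') y = b x y - b x' y"
  using module_hom.diff[OF b_hom_left] by simp
lemma b_diff_right [simp]: "b y (x - x') = b y x - b y x'"
  using module_hom.diff[OF b_hom_right] by simp

lemma b_sym: "b x y = b y x"
  unfolding polar_def by (simp add: add.commute)

lemma norm_zero [simp]: "N 0 = 0"
  using norm_scale[of 0 0] by simp

lemma norm_add: "N (x + y) = N x + N y + b x y"
  unfolding polar_def by simp

lemma b_self: "b x x = 2 * N x"
proof -
  have "N (x + x) = 4 * N x" by (simp add: scale_two)
  then show ?thesis unfolding polar_def by simp
qed

lemma nondegenerate_b: "(\<And>y. b x y = 0) \<Longrightarrow> x = 0"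
  using is_nondegenerate unfolding nondegenerate_def by blast

lemma b_mult_right: "b (y \<odot> x) (z \<odot> x) = b y z * N x"
proof -
  have "N ((y + z) \<odot> x) = N (y + z) * N x" by (rule norm_mult)
  then show ?thesis by (simp add: norm_add norm_mult algebra_simps)
qed

lemma b_mult_linearised: "b (y \<odot> x) (z \<odot> w) + b (y \<odot> w) (z \<odot> x) = b y z * b x w"
proof -
  have "b (y \<odot> (x + w)) (z \<odot> (x + w)) = b y z * N (x + w)" by (rule b_mult_right)
  then show ?thesis
    by (simp add: b_mult_right norm_add algebra_simps b_sym[of "y \<odot> w" "z \<odot> x"] b_sym[of w x])
qed

definition tr :: "'c \<Rightarrow> 'k" where "tr x = b x e"
definition cnj :: "'c \<Rightarrow> 'c" where "cnj x = tr x \<star> e - x"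

lemma tr_add [simp]: "tr (x + y) = tr x + tr y"
  and tr_scale [simp]: "tr (c \<star> x) = c * tr x"
  and tr_diff [simp]: "tr (x - y) = tr x - tr y"
  and tr_zero [simp]: "tr 0 = 0"
  unfolding tr_def by simp_all

lemma norm_unit [simp]: "N e = 1"
proof -
  have idem: "N e = N e * N e" using norm_mult[of e e] by simp
  have "N e \<noteq> 0"
  proof
    assume "N e = 0"
    then have "b x y = 0" for x y using norm_mult[of e] unfolding polar_def by simp
    then have "x = 0" for x :: 'c using nondegenerate_b by metis
    then show False using nontrivial by blast
  qed
  then show ?thesis using idem by (metis mult_cancel_left1)
qed

lemma tr_unit [simp]: "tr e = 2"
  unfolding tr_def by (simp add: b_self)

lemma cnj_cnj [simp]: "cnj (cnj x) = x"
  unfolding cnj_def by simp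

lemma b_adjoint: "b (u \<odot> w) z = b u (z \<odot> cnj w)"
proof -
  have "b (u \<odot> w) (z \<odot> e) + b (u \<odot> e) (z \<odot> w) = b u z * b w e" by (rule b_mult_linearised)
  then show ?thesis unfolding cnj_def tr_def by (simp add: algebra_simps)
qed

(* The basic identity of composition algebras, (u z) (cnj w) + (u w) (cnj z) = b w z u,
   obtained from the linearised multiplicativity by nondegeneracy. *)
lemma right_mult_cnj_identity: "(u \<odot> z) \<odot> cnj w + (u \<odot> w) \<odot> cnj z = b w z \<star> u"
proof -
  have "b ((u \<odot> z) \<odot> cnj w + (u \<odot> w) \<odot> cnj z - b w z \<star> u) v = 0" for v
  proof -
    have "b (u \<odot> z) (v \<odot> w) + b (u \<odot> w) (v \<odot> z) = b u v * b z w" by (rule b_mult_linearised)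
    then show ?thesis using b_adjoint[of _ "cnj _"] by (simp add: b_sym[of z w])
  qed
  then show ?thesis using nondegenerate_b by (metis eq_iff_diff_eq_0)
qed

lemma quadratic_equation: "x \<odot> x = tr x \<star> x - N x \<star> e"
proof -
  have "(e \<odot> x) \<odot> cnj x + (e \<odot> x) \<odot> cnj x = b x x \<star> e" by (rule right_mult_cnj_identity)
  then have "(2::'k) \<star> (tr x \<star> x - x \<odot> x) = 2 \<star> (N x \<star> e)"
    by (simp add: scale_two cnj_def b_self)
  then have "tr x \<star> x - x \<odot> x = N x \<star> e" by (rule scale_two_cancel)
  then show ?thesis by (simp add: algebra_simps)
qed

lemma right_mult_cnj: "(y \<odot> a) \<odot> cnj a = N a \<star> y"
proof -
  have "(y \<odot> a) \<odot> cnj a + (y \<odot> a) \<odot> cnj a = b a a \<star> y" by (rule right_mult_cnj_identity)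
  then have "(2::'k) \<star> ((y \<odot> a) \<odot> cnj a) = 2 \<star> (N a \<star> y)" by (simp add: scale_two b_self)
  then show ?thesis by (rule scale_two_cancel)
qed

lemma right_mult_twice: "tr a = 0 \<Longrightarrow> (y \<odot> a) \<odot> a = - (N a \<star> y)"
  using right_mult_cnj[of y a] by (simp add: cnj_def) (metis minus_minus)

end

(* Its fixed subalgebra D
   and its (-1)-eigenspace W give the Cayley-Dickson decomposition C = D \<oplus> D a
   for any a \<in> W with N a \<noteq> 0. *)
locale algebra_involution = composition_algebra scale mult e N
  for scale :: "'k::field \<Rightarrow> 'c::ab_group_add \<Rightarrow> 'c" (infixr "\<star>" 75)
    and mult :: "'c \<Rightarrow> 'c \<Rightarrow> 'c" (infixl "\<odot>" 70)
    and e :: 'c and N :: "'c \<Rightarrow> 'k" +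
  fixes t :: "'c \<Rightarrow> 'c"
  assumes t_linear: "Vector_Spaces.linear scale scale t"
    and t_mult: "\<And>x y. t (x \<odot> y) = t x \<odot> t y"
    and t_t [simp]: "\<And>x. t (t x) = x"
    and t_not_id: "\<exists>x. t x \<noteq> x"
begin

lemma t_hom: "module_hom scale scale t" using module_hom_linearI[OF t_linear] .
lemma t_add [simp]: "t (x + y) = t x + t y" using module_hom.add[OF t_hom] .
lemma t_scale [simp]: "t (c \<star> x) = c \<star> t x" using module_hom.scale[OF t_hom] .
lemma t_zero [simp]: "t 0 = 0" using module_hom.zero[OF t_hom] .
lemma t_neg [simp]: "t (- x) = - t x" using module_hom.neg[OF t_hom] .
lemma t_diff [simp]: "t (x - y) = t x - t y" using module_hom.diff[OF t_hom] .

lemma t_unit [simp]: "t e = e"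
  using t_mult[of e "t e"] by simp

abbreviation D :: "'c set" where "D \<equiv> fixed_subalgebra t"
definition W :: "'c set" where "W = {x. t x = - x}"

lemma mem_D: "x \<in> D \<longleftrightarrow> t x = x" unfolding fixed_subalgebra_def by simp
lemma mem_W: "x \<in> W \<longleftrightarrow> t x = - x" unfolding W_def by simp

lemma unit_D [simp]: "e \<in> D" by (simp add: mem_D)
lemma D_add: "x \<in> D \<Longrightarrow> y \<in> D \<Longrightarrow> x + y \<in> D" by (simp add: mem_D)
lemma D_diff: "x \<in> D \<Longrightarrow> y \<in> D \<Longrightarrow> x - y \<in> D" by (simp add: mem_D)
lemma D_neg: "x \<in> D \<Longrightarrow> - x \<in> D" by (simp add: mem_D)
lemma D_scale: "x \<in> D \<Longrightarrow> c \<star> x \<in> D" by (simp add: mem_D)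
lemma W_add: "x \<in> W \<Longrightarrow> y \<in> W \<Longrightarrow> x + y \<in> W" by (simp add: mem_W)
lemma W_scale: "x \<in> W \<Longrightarrow> c \<star> x \<in> W" by (simp add: mem_W)
lemma D_mult_D: "x \<in> D \<Longrightarrow> y \<in> D \<Longrightarrow> x \<odot> y \<in> D" by (simp add: mem_D t_mult)
lemma D_mult_W: "x \<in> D \<Longrightarrow> y \<in> W \<Longrightarrow> x \<odot> y \<in> W" by (simp add: mem_D mem_W t_mult)
lemma W_mult_D: "x \<in> W \<Longrightarrow> y \<in> D \<Longrightarrow> x \<odot> y \<in> W" by (simp add: mem_D mem_W t_mult)
lemma W_mult_W: "x \<in> W \<Longrightarrow> y \<in> W \<Longrightarrow> x \<odot> y \<in> D" by (simp add: mem_D mem_W t_mult)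
lemma cnj_D: "x \<in> D \<Longrightarrow> cnj x \<in> D" unfolding cnj_def by (intro D_diff D_scale unit_D)

lemma subspace_D: "V.subspace D" unfolding V.subspace_def by (auto intro: D_add D_scale simp: mem_D)
lemma subspace_W: "V.subspace W" unfolding V.subspace_def by (auto intro: W_add W_scale simp: mem_W)

lemma D_inter_W: "D \<inter> W \<subseteq> {0}"
proof
  fix x assume "x \<in> D \<inter> W"
  then have "x + x = 0" by (simp add: mem_D mem_W) (metis add.right_inverse)
  then have "(2::'k) \<star> x = 0" by (simp add: scale_two)
  then show "x \<in> {0}" using two_nonzero by simp
qed

(* Elements of W are pure: applying t to x x = tr x x - N x e forces tr x = 0. *)
lemma tr_W: "x \<in> W \<Longrightarrow> tr x = 0"
proof -
  assume "x \<in> W"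
  then have tx: "t x = - x" by (simp add: mem_W)
  have "t (x \<odot> x) = x \<odot> x" by (simp add: t_mult tx)
  then have "- (tr x \<star> x) = tr x \<star> x" by (simp add: quadratic_equation tx)
  then have "tr x \<star> x + tr x \<star> x = 0" by (metis add.commute neg_eq_iff_add_eq_0)
  then have "(2 * tr x) \<star> x = 0" by (simp add: scale_two)
  then have "x = 0 \<or> tr x = 0" using two_nonzero by auto
  then show "tr x = 0" by auto
qed

lemma cnj_W: "x \<in> W \<Longrightarrow> cnj x = - x" unfolding cnj_def by (simp add: tr_W)

lemma D_orth_W: "x \<in> D \<Longrightarrow> y \<in> W \<Longrightarrow> b x y = 0"
proof -
  assume x: "x \<in> D" and y: "y \<in> W"
  have "b x y = b (e \<odot> x) y" by simp
  also have "\<dots> = b e (y \<odot> cnj x)" by (rule b_adjoint)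
  also have "\<dots> = tr (y \<odot> cnj x)" unfolding tr_def by (rule b_sym)
  also have "\<dots> = 0" using W_mult_D[OF y cnj_D[OF x]] by (rule tr_W)
  finally show ?thesis .
qed

definition proj_D :: "'c \<Rightarrow> 'c" where "proj_D x = (1/2::'k) \<star> (x + t x)"
definition proj_W :: "'c \<Rightarrow> 'c" where "proj_W x = (1/2::'k) \<star> (x - t x)"

lemma proj_D_in: "proj_D x \<in> D" unfolding proj_D_def mem_D by (simp add: add.commute)
lemma proj_W_in: "proj_W x \<in> W" unfolding proj_W_def mem_W by (simp add: algebra_simps)

lemma proj_D_W: "proj_D x + proj_W x = x"
proof -
  have "proj_D x + proj_W x = (1/2::'k) \<star> (x + x)"
    unfolding proj_D_def proj_W_def by (simp add: algebra_simps)
  then show ?thesis by (simp add: half_double)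
qed

lemma proj_D_add [simp]: "proj_D (x + y) = proj_D x + proj_D y"
  and proj_D_scale [simp]: "proj_D (c \<star> x) = c \<star> proj_D x"
  and proj_W_add [simp]: "proj_W (x + y) = proj_W x + proj_W y"
  and proj_W_scale [simp]: "proj_W (c \<star> x) = c \<star> proj_W x"
  unfolding proj_D_def proj_W_def by (simp_all add: algebra_simps)

(* Orthogonality of D and W reduces nondegeneracy tests to one summand. *)
lemma b_zero_if_orth_D: "x \<in> D \<Longrightarrow> (\<And>z. z \<in> D \<Longrightarrow> b x z = 0) \<Longrightarrow> b x y = 0"
proof -
  assume x: "x \<in> D" and orth: "\<And>z. z \<in> D \<Longrightarrow> b x z = 0"
  have "b x y = b x (proj_D y) + b x (proj_W y)" by (simp flip: b_add_right add: proj_D_W)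
  then show ?thesis using orth[OF proj_D_in] D_orth_W[OF x proj_W_in] by simp
qed

(* Since t \<noteq> id, W is nonzero, and nondegeneracy forces an anisotropic vector in W. *)
lemma anisotropic_in_W: "\<exists>a\<in>W. N a \<noteq> 0"
proof (rule ccontr)
  assume "\<not> (\<exists>a\<in>W. N a \<noteq> 0)"
  then have N_W: "\<And>a. a \<in> W \<Longrightarrow> N a = 0" by blast
  have b_W: "b u v = 0" if "u \<in> W" "v \<in> W" for u v
    using N_W[OF that(1)] N_W[OF that(2)] N_W[OF W_add[OF that]] unfolding polar_def by simp
  obtain x where x: "t x \<noteq> x" using t_not_id by blast
  have "proj_W x \<noteq> 0"
  proof
    assume "proj_W x = 0"
    then have "proj_D x = x" using proj_D_W[of x] by simp
    then show False using proj_D_in[of x] x by (simp add: mem_D)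
  qed
  moreover have "b (proj_W x) y = 0" for y
  proof -
    have "b (proj_W x) y = b (proj_W x) (proj_D y) + b (proj_W x) (proj_W y)"
      by (simp flip: b_add_right add: proj_D_W)
    then show ?thesis
      using D_orth_W[OF proj_D_in proj_W_in] b_W[OF proj_W_in proj_W_in] by (simp add: b_sym)
  qed
  ultimately show False using nondegenerate_b by blast
qed

(* Multiplication rules of the Cayley-Dickson double, for x, y, u \<in> D and a \<in> W;
   all are instances of right_mult_cnj_identity combined with D \<bottom> W. *)
lemma mult_D_W_assoc: "x \<in> D \<Longrightarrow> a \<in> W \<Longrightarrow> (y \<odot> x) \<odot> a = (y \<odot> a) \<odot> cnj x"
  using right_mult_cnj_identity[of y a x] by (simp add: cnj_W D_orth_W algebra_simps)

lemma mult_D_DW: "x \<in> D \<Longrightarrow> y \<in> D \<Longrightarrow> a \<in> W \<Longrightarrow> x \<odot> (y \<odot> a) = (y \<odot> x) \<odot> a"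
proof -
  assume x: "x \<in> D" and y: "y \<in> D" and a: "a \<in> W"
  have ya: "y \<odot> a \<in> W" by (rule D_mult_W[OF y a])
  have "(e \<odot> x) \<odot> cnj (y \<odot> a) + (e \<odot> (y \<odot> a)) \<odot> cnj x = b (y \<odot> a) x \<star> e"
    by (rule right_mult_cnj_identity)
  then have "x \<odot> (y \<odot> a) = (y \<odot> a) \<odot> cnj x"
    using ya x by (simp add: cnj_W D_orth_W b_sym[of _ x] algebra_simps)
  then show ?thesis using mult_D_W_assoc[OF x a] by simp
qed

lemma mult_DW_D: "u \<in> D \<Longrightarrow> a \<in> W \<Longrightarrow> (y \<odot> a) \<odot> u = (y \<odot> cnj u) \<odot> a"
  using mult_D_W_assoc[OF cnj_D, of u a y] by simp

lemma mult_DW_DW: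
  "x \<in> D \<Longrightarrow> y \<in> D \<Longrightarrow> a \<in> W \<Longrightarrow> (x \<odot> a) \<odot> (y \<odot> a) = - (N a \<star> (cnj y \<odot> x))"
proof -
  assume x: "x \<in> D" and y: "y \<in> D" and a: "a \<in> W"
  have ya: "y \<odot> a \<in> W" by (rule D_mult_W[OF y a])
  have "(x \<odot> a) \<odot> cnj (y \<odot> a) + (x \<odot> (y \<odot> a)) \<odot> cnj a = b (y \<odot> a) a \<star> x"
    by (rule right_mult_cnj_identity)
  moreover have "b (y \<odot> a) a = tr y * N a" using b_mult_right[of y a e] by (simp add: tr_def)
  moreover have "(x \<odot> (y \<odot> a)) \<odot> a = - (N a \<star> (y \<odot> x))"
    using mult_D_DW[OF x y a] right_mult_twice[OF tr_W[OF a]] by simp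
  ultimately have "- ((x \<odot> a) \<odot> (y \<odot> a)) + N a \<star> (y \<odot> x) = (tr y * N a) \<star> x"
    using ya a by (simp add: cnj_W)
  then show ?thesis unfolding cnj_def by (simp add: algebra_simps)
qed

lemma cayley_dickson_mult:
  "x \<in> D \<Longrightarrow> y \<in> D \<Longrightarrow> u \<in> D \<Longrightarrow> v \<in> D \<Longrightarrow> a \<in> W \<Longrightarrow>
   (x + y \<odot> a) \<odot> (u + v \<odot> a) = (x \<odot> u - N a \<star> (cnj v \<odot> y)) + (v \<odot> x + y \<odot> cnj u) \<odot> a"
  by (simp add: mult_D_DW mult_DW_D mult_DW_DW algebra_simps)

(* The D-coordinate of z along a: z = proj_D z + coord a z \<odot> a. *)
definition coord :: "'c \<Rightarrow> 'c \<Rightarrow> 'c" where "coord a z = - ((1 / N a) \<star> (proj_W z \<odot> a))"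

lemma coord_in: "a \<in> W \<Longrightarrow> coord a z \<in> D"
  unfolding coord_def by (intro D_neg D_scale W_mult_W proj_W_in)

lemma coord_add [simp]: "coord a (x + y) = coord a x + coord a y"
  and coord_scale [simp]: "coord a (c \<star> x) = c \<star> coord a x"
  unfolding coord_def by (simp_all add: algebra_simps)

lemma cayley_dickson_decomp: "a \<in> W \<Longrightarrow> N a \<noteq> 0 \<Longrightarrow> z = proj_D z + coord a z \<odot> a"
proof -
  assume a: "a \<in> W" "N a \<noteq> 0"
  have "coord a z \<odot> a = proj_W z" unfolding coord_def using a by (simp add: right_mult_twice tr_W)
  then show ?thesis by (simp add: proj_D_W)
qed

lemma cayley_dickson_unique:
  assumes a: "a \<in> W" "N a \<noteq> 0" and p: "p \<in> D" and q: "q \<in> D"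
  shows "proj_D (p + q \<odot> a) = p \<and> coord a (p + q \<odot> a) = q"
proof -
  have tp: "t p = p" using p by (simp add: mem_D)
  have tq: "t (q \<odot> a) = - (q \<odot> a)" using D_mult_W[OF q a(1)] by (simp add: mem_W)
  have "proj_D (p + q \<odot> a) = p" unfolding proj_D_def using tp tq by (simp add: half_double)
  moreover have "proj_W (p + q \<odot> a) = q \<odot> a" unfolding proj_W_def using tp tq
    by (simp add: half_double)
  then have "coord a (p + q \<odot> a) = q" unfolding coord_def using a by (simp add: right_mult_twice tr_W)
  ultimately show ?thesis by simp
qed

end

locale cayley_dickson_extension = composition_algebra scale mult e N +
  S: algebra_involution scale mult e N s + T: algebra_involution scale mult e N t
  for scale :: "'k::field \<Rightarrow> 'c::ab_group_add \<Rightarrow> 'c" (infixr "\<star>" 75)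
    and mult :: "'c \<Rightarrow> 'c \<Rightarrow> 'c" (infixl "\<odot>" 70)
    and e :: 'c and N :: "'c \<Rightarrow> 'k" and s t :: "'c \<Rightarrow> 'c" +
  fixes a a' :: 'c and f :: "'c \<Rightarrow> 'c"
  assumes a_W: "a \<in> T.W" and a_anisotropic: "N a \<noteq> 0"
    and a'_W: "a' \<in> S.W" and same_norm: "N a' = N a"
    and f_iso: "alg_iso_on scale mult e T.D S.D f"
begin

lemma a'_anisotropic: "N a' \<noteq> 0" using a_anisotropic same_norm by simp

lemma f_bij: "bij_betw f T.D S.D" using f_iso unfolding alg_iso_on_def by blast
lemma f_add: "x \<in> T.D \<Longrightarrow> y \<in> T.D \<Longrightarrow> f (x + y) = f x + f y"
  using f_iso unfolding alg_iso_on_def by blast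
lemma f_scale: "x \<in> T.D \<Longrightarrow> f (c \<star> x) = c \<star> f x"
  using f_iso unfolding alg_iso_on_def by blast
lemma f_mult: "x \<in> T.D \<Longrightarrow> y \<in> T.D \<Longrightarrow> f (x \<odot> y) = f x \<odot> f y"
  using f_iso unfolding alg_iso_on_def by blast
lemma f_unit: "f e = e"
  using f_iso unfolding alg_iso_on_def by blast

lemma f_in: "x \<in> T.D \<Longrightarrow> f x \<in> S.D" using f_bij bij_betwE by blast

lemma f_diff: "x \<in> T.D \<Longrightarrow> y \<in> T.D \<Longrightarrow> f (x - y) = f x - f y"
  using f_add[of "x - y" y] T.D_diff by (metis add_diff_cancel diff_add_cancel)

(* f preserves the trace: otherwise the two quadratic equations for f x would make
   f x a scalar multiple of e, contradicting injectivity. *)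
lemma f_tr: assumes x: "x \<in> T.D" shows "tr (f x) = tr x"
proof (rule ccontr)
  assume ne: "tr (f x) \<noteq> tr x"
  have "f x \<odot> f x = f (tr x \<star> x - N x \<star> e)" using f_mult[OF x x] by (simp add: quadratic_equation)
  also have "\<dots> = tr x \<star> f x - N x \<star> e" using x by (simp add: f_diff f_scale T.D_scale f_unit)
  finally have "(tr (f x) - tr x) \<star> f x = (N (f x) - N x) \<star> e"
    by (simp add: quadratic_equation algebra_simps)
  then have "(1 / (tr (f x) - tr x)) \<star> ((tr (f x) - tr x) \<star> f x)
      = (1 / (tr (f x) - tr x)) \<star> ((N (f x) - N x) \<star> e)" by simp
  then have fx: "f x = c \<star> e" if "c = (N (f x) - N x) / (tr (f x) - tr x)" for c
    using ne that by simp
  define c where "c = (N (f x) - N x) / (tr (f x) - tr x)"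
  have "f (c \<star> e) = f x" using fx[OF c_def] f_scale[OF T.unit_D, of c] f_unit by simp
  then have "c \<star> e = x" using f_bij x T.D_scale[OF T.unit_D] unfolding bij_betw_def inj_on_def by blast
  then have "tr x = tr (f x)" using fx[OF c_def] by auto
  then show False using ne by simp
qed

lemma f_cnj: "x \<in> T.D \<Longrightarrow> f (cnj x) = cnj (f x)"
  unfolding cnj_def by (simp add: f_diff f_scale T.D_scale f_unit f_tr)

definition g :: "'c \<Rightarrow> 'c" where "g z = f (T.proj_D z) + f (T.coord a z) \<odot> a'"

definition f_inv :: "'c \<Rightarrow> 'c" where "f_inv = inv_into T.D f"
definition g_inv :: "'c \<Rightarrow> 'c" where "g_inv z = f_inv (S.proj_D z) + f_inv (S.coord a' z) \<odot> a"

lemma f_inv_in: "y \<in> S.D \<Longrightarrow> f_inv y \<in> T.D"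
  unfolding f_inv_def using f_bij by (metis bij_betw_def inv_into_into)
lemma f_f_inv: "y \<in> S.D \<Longrightarrow> f (f_inv y) = y"
  unfolding f_inv_def using f_bij by (metis bij_betw_def f_inv_into_f)
lemma f_inv_f: "x \<in> T.D \<Longrightarrow> f_inv (f x) = x"
  unfolding f_inv_def using f_bij by (metis bij_betw_def inv_into_f_f)

lemma g_inv_g: "g_inv (g z) = z"
proof -
  have u: "S.proj_D (g z) = f (T.proj_D z) \<and> S.coord a' (g z) = f (T.coord a z)"
    unfolding g_def
    by (rule S.cayley_dickson_unique[OF a'_W a'_anisotropic f_in[OF T.proj_D_in] f_in[OF T.coord_in[OF a_W]]])
  have "g_inv (g z) = T.proj_D z + T.coord a z \<odot> a"
    unfolding g_inv_def using u by (simp add: f_inv_f T.proj_D_in T.coord_in[OF a_W])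
  also have "\<dots> = z" by (rule T.cayley_dickson_decomp[OF a_W a_anisotropic, symmetric])
  finally show ?thesis .
qed

lemma g_g_inv: "g (g_inv z) = z"
proof -
  have u: "T.proj_D (g_inv z) = f_inv (S.proj_D z) \<and> T.coord a (g_inv z) = f_inv (S.coord a' z)"
    unfolding g_inv_def
    by (rule T.cayley_dickson_unique[OF a_W a_anisotropic f_inv_in[OF S.proj_D_in] f_inv_in[OF S.coord_in[OF a'_W]]])
  have "g (g_inv z) = S.proj_D z + S.coord a' z \<odot> a'"
    unfolding g_def using u by (simp add: f_f_inv S.proj_D_in S.coord_in[OF a'_W])
  also have "\<dots> = z" by (rule S.cayley_dickson_decomp[OF a'_W a'_anisotropic, symmetric])
  finally show ?thesis .
qed

lemma g_bij: "bij g"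
  unfolding bij_def inj_def surj_def by (metis g_inv_g g_g_inv)

lemma g_linear: "Vector_Spaces.linear scale scale g"
proof -
  have "g (x + y) = g x + g y" for x y
    unfolding g_def by (simp add: f_add T.proj_D_in T.coord_in[OF a_W] algebra_simps)
  moreover have "g (c \<star> x) = c \<star> g x" for c x
    unfolding g_def by (simp add: f_scale T.proj_D_in T.coord_in[OF a_W] algebra_simps)
  ultimately show ?thesis unfolding Vector_Spaces.linear_iff using is_vector_space by blast
qed

(* Multiplicativity: both sides are computed by the Cayley-Dickson formula, which
   f respects because it preserves products, conjugation and (N a' = N a) the
   structure constant. *)
lemma g_mult: "g (z1 \<odot> z2) = g z1 \<odot> g z2"
proof -
  define p1 q1 p2 q2
    where "p1 = T.proj_D z1" "q1 = T.coord a z1" "p2 = T.proj_D z2" "q2 = T.coord a z2"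
  have D: "p1 \<in> T.D" "q1 \<in> T.D" "p2 \<in> T.D" "q2 \<in> T.D"
    unfolding p1_q1_p2_q2_def by (simp_all add: T.proj_D_in T.coord_in[OF a_W])
  have z: "z1 = p1 + q1 \<odot> a" "z2 = p2 + q2 \<odot> a"
    unfolding p1_q1_p2_q2_def by (simp_all flip: T.cayley_dickson_decomp[OF a_W a_anisotropic])
  define X Y where "X = p1 \<odot> p2 - N a \<star> (cnj q2 \<odot> q1)" "Y = q2 \<odot> p1 + q1 \<odot> cnj p2"
  have XY: "X \<in> T.D" "Y \<in> T.D" unfolding X_Y_def using D
    by (auto intro!: T.D_mult_D T.D_diff T.D_add T.D_scale T.cnj_D)
  have "z1 \<odot> z2 = X + Y \<odot> a"
    unfolding z X_Y_def by (rule T.cayley_dickson_mult[OF D(1,2,3,4) a_W])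
  then have coords: "T.proj_D (z1 \<odot> z2) = X \<and> T.coord a (z1 \<odot> z2) = Y"
    using T.cayley_dickson_unique[OF a_W a_anisotropic XY] by simp
  have fX: "f X = f p1 \<odot> f p2 - N a \<star> (cnj (f q2) \<odot> f q1)"
    unfolding X_Y_def using D by (simp add: f_diff f_mult f_scale f_cnj T.D_mult_D T.D_scale T.cnj_D)
  have fY: "f Y = f q2 \<odot> f p1 + f q1 \<odot> cnj (f p2)"
    unfolding X_Y_def using D by (simp add: f_add f_mult f_cnj T.D_mult_D T.cnj_D)
  have gz: "g z1 = f p1 + f q1 \<odot> a'" "g z2 = f p2 + f q2 \<odot> a'"
    unfolding g_def p1_q1_p2_q2_def by simp_all
  have "g z1 \<odot> g z2
      = (f p1 \<odot> f p2 - N a' \<star> (cnj (f q2) \<odot> f q1)) + (f q2 \<odot> f p1 + f q1 \<odot> cnj (f p2)) \<odot> a'"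
    unfolding gz using D by (intro S.cayley_dickson_mult f_in a'_W)
  then show ?thesis unfolding g_def using coords fX fY same_norm by simp
qed

lemma g_aut: "is_aut scale mult g"
  unfolding is_aut_def using g_bij g_linear g_mult by blast

(* g intertwines t and s: t acts by p + q a \<mapsto> p - q a, s by the analogue with a'. *)
lemma g_intertwines: "s (g z) = g (t z)"
proof -
  have "t z = t (T.proj_D z + T.coord a z \<odot> a)"
    using T.cayley_dickson_decomp[OF a_W a_anisotropic, of z] by simp
  also have "\<dots> = T.proj_D z + (- T.coord a z) \<odot> a"
    using T.proj_D_in[of z] T.coord_in[OF a_W, of z] a_W by (simp add: T.mem_D T.mem_W T.t_mult)
  finally have coords: "T.proj_D (t z) = T.proj_D z \<and> T.coord a (t z) = - T.coord a z"
    using T.cayley_dickson_unique[OF a_W a_anisotropic T.proj_D_in T.D_neg[OF T.coord_in[OF a_W]]]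
    by simp
  have "s (g z) = f (T.proj_D z) - f (T.coord a z) \<odot> a'"
    unfolding g_def using f_in[OF T.proj_D_in] f_in[OF T.coord_in[OF a_W]] a'_W
    by (simp add: S.mem_D S.mem_W S.t_mult)
  also have "\<dots> = g (t z)" unfolding g_def
    using f_scale[OF T.coord_in[OF a_W], of "-1"] coords by simp
  finally show ?thesis .
qed

lemma g_conjugates: "s = g \<circ> t \<circ> inv g"
proof
  fix z
  have "g (inv g z) = z" using g_bij by (simp add: bij_is_surj surj_f_inv_f)
  then show "s z = (g \<circ> t \<circ> inv g) z" using g_intertwines by (metis comp_apply)
qed

end

lemma conjugate_fixed_subalgebras_iso:
  assumes g: "is_aut scale mult g" and sg: "s = g \<circ> t \<circ> inv g"
    and unit_left: "\<And>x. mult e x = x" and unit_right: "\<And>x. mult x e = x"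
  shows "alg_iso_on scale mult e (fixed_subalgebra t) (fixed_subalgebra s) g"
proof -
  have "bij g" and g_lin: "Vector_Spaces.linear scale scale g"
    and g_mult: "\<And>x y. g (mult x y) = mult (g x) (g y)" using g unfolding is_aut_def by auto
  then have g_inv_g: "\<And>x. inv g (g x) = x" and g_g_inv: "\<And>y. g (inv g y) = y"
    by (simp_all add: bij_is_inj bij_is_surj surj_f_inv_f)
  have "g ` fixed_subalgebra t = fixed_subalgebra s"
  proof (intro equalityI subsetI)
    fix y assume "y \<in> g ` fixed_subalgebra t"
    then show "y \<in> fixed_subalgebra s" using sg g_inv_g by (auto simp: fixed_subalgebra_def)
  next
    fix y assume "y \<in> fixed_subalgebra s"
    then have "g (t (inv g y)) = g (inv g y)" using sg g_g_inv by (simp add: fixed_subalgebra_def)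
    then have "t (inv g y) = inv g y" by (metis g_inv_g)
    then have "inv g y \<in> fixed_subalgebra t" by (simp add: fixed_subalgebra_def)
    then show "y \<in> g ` fixed_subalgebra t" using g_g_inv[of y] by (metis image_eqI)
  qed
  then have "bij_betw g (fixed_subalgebra t) (fixed_subalgebra s)"
    using \<open>bij g\<close> by (metis bij_betw_def bij_is_inj inj_on_subset subset_UNIV)
  moreover have "g e = e"
    using g_mult[of e "inv g e"] g_g_inv unit_left unit_right by metis
  moreover have hom: "module_hom scale scale g" using module_hom_linearI[OF g_lin] .
  ultimately show ?thesis unfolding alg_iso_on_def
    using g_mult module_hom.add[OF hom] module_hom.scale[OF hom] by blast
qed

(* An octonion algebra: a composition algebra of dimension 8.  We fix a basis to
   make the library's theory of finite-dimensional vector spaces available. *)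
locale octonion = composition_algebra scale mult e N
  for scale :: "'k::field \<Rightarrow> 'c::ab_group_add \<Rightarrow> 'c" (infixr "\<star>" 75)
    and mult :: "'c \<Rightarrow> 'c \<Rightarrow> 'c" (infixl "\<odot>" 70)
    and e :: 'c and N :: "'c \<Rightarrow> 'k" +
  assumes dim_eight: "vector_space.dim scale (UNIV :: 'c set) = 8"
begin

definition basis :: "'c set" where "basis = (SOME B. V.independent B \<and> V.span B = UNIV)"

lemma basis: "finite basis" "V.independent basis" "V.span basis = UNIV"
proof -
  obtain B where "V.independent B" "UNIV \<subseteq> V.span B"
    using V.basis_exists[of UNIV] by blast
  then have "V.independent B \<and> V.span B = UNIV" by auto
  then have indep: "V.independent basis \<and> V.span basis = UNIV"
    unfolding basis_def by (rule someI)
  then have "card basis = 8" using V.dim_eq_card[of basis UNIV] dim_eight by simp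
  then show "finite basis" by (intro card_ge_0_finite) simp
  show "V.independent basis" "V.span basis = UNIV" using indep by auto
qed

sublocale F: finite_dimensional_vector_space scale basis
  by unfold_locales (use basis in auto)

lemma nonzero_in_intersection:
  assumes U: "V.subspace U" and U': "V.subspace U'" and K: "V.subspace K"
    and "U \<subseteq> K" "U' \<subseteq> K" and dims: "V.dim K < V.dim U + V.dim U'"
  shows "\<exists>w. w \<in> U \<and> w \<in> U' \<and> w \<noteq> 0"
proof -
  have "{x + y |x y. x \<in> U \<and> y \<in> U'} \<subseteq> K"
  proof
    fix z assume "z \<in> {x + y |x y. x \<in> U \<and> y \<in> U'}"
    then obtain x y where "z = x + y" "x \<in> K" "y \<in> K" using \<open>U \<subseteq> K\<close> \<open>U' \<subseteq> K\<close> by blast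
    then show "z \<in> K" using V.subspace_add[OF K] by blast
  qed
  then have "V.dim {x + y |x y. x \<in> U \<and> y \<in> U'} \<le> V.dim K" by (rule F.dim_subset)
  then have "V.dim (U \<inter> U') \<noteq> 0" using F.dim_sums_Int[OF U U'] dims by linarith
  then have "\<not> U \<inter> U' \<subseteq> {0}" by simp
  then show ?thesis by auto
qed

(* The pure (trace-zero) elements form a proper subspace, as tr e = 2 \<noteq> 0. *)
lemma subspace_trace_zero: "V.subspace {x. tr x = 0}"
  unfolding V.subspace_def by auto

lemma dim_trace_zero: "V.dim {x. tr x = 0} < 8"
proof -
  have "e \<notin> {x. tr x = 0}" using two_nonzero by simp
  moreover have "V.span {x. tr x = 0} = {x. tr x = 0}" using subspace_trace_zero by simp
  ultimately have "V.span {x. tr x = 0} \<subset> V.span UNIV"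
    by (metis V.span_UNIV UNIV_I psubsetI subset_UNIV)
  then have "V.dim {x. tr x = 0} < V.dim (UNIV :: 'c set)" by (rule F.dim_psubset)
  then show ?thesis using dim_eight by linarith
qed

end

locale octonion_involution = octonion scale mult e N + algebra_involution scale mult e N t
  for scale :: "'k::field \<Rightarrow> 'c::ab_group_add \<Rightarrow> 'c" (infixr "\<star>" 75)
    and mult :: "'c \<Rightarrow> 'c \<Rightarrow> 'c" (infixl "\<odot>" 70)
    and e :: 'c and N :: "'c \<Rightarrow> 'k" and t :: "'c \<Rightarrow> 'c"
begin

lemma D_right_mult_W: assumes a: "a \<in> W" "N a \<noteq> 0" shows "D = (\<lambda>v. v \<odot> a) ` W"
proof (intro equalityI subsetI)
  fix d assume d: "d \<in> D"
  have "d = (- (1 / N a) \<star> (d \<odot> a)) \<odot> a"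
    using a by (simp add: right_mult_twice tr_W)
  moreover have "- (1 / N a) \<star> (d \<odot> a) \<in> W" using d a by (intro W_scale D_mult_W)
  ultimately show "d \<in> (\<lambda>v. v \<odot> a) ` W" by blast
qed (use a W_mult_W in auto)

(* Hence dim D \<le> dim W; with C = D \<oplus> W this gives dim W \<ge> 4. *)
lemma dim_W: "4 \<le> V.dim W"
proof -
  interpret P: finite_dimensional_vector_space_pair_1 scale basis scale ..
  obtain a where a: "a \<in> W" "N a \<noteq> 0" using anisotropic_in_W by blast
  have "V.dim D \<le> V.dim W"
    using P.dim_image_le[OF mult_linear_left[of a], of W] D_right_mult_W[OF a] by simp
  moreover have "V.dim D + V.dim W = 8"
  proof -
    have "x \<in> {x + y |x y. x \<in> D \<and> y \<in> W}" for x
      using proj_D_in proj_W_in proj_D_W[of x, symmetric] by blast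
    then have "{x + y |x y. x \<in> D \<and> y \<in> W} = UNIV" by blast
    then have "V.dim (UNIV :: 'c set) + V.dim (D \<inter> W) = V.dim D + V.dim W"
      using F.dim_sums_Int[OF subspace_D subspace_W] by (simp only:)
    moreover have "V.dim (D \<inter> W) = 0" using D_inter_W F.dim_eq_0 by blast
    ultimately show ?thesis using dim_eight by linarith
  qed
  ultimately show ?thesis by linarith
qed

end

locale involution_pair = octonion scale mult e N +
  S: octonion_involution scale mult e N s + T: octonion_involution scale mult e N t
  for scale :: "'k::field \<Rightarrow> 'c::ab_group_add \<Rightarrow> 'c" (infixr "\<star>" 75)
    and mult :: "'c \<Rightarrow> 'c \<Rightarrow> 'c" (infixl "\<odot>" 70)
    and e :: 'c and N :: "'c \<Rightarrow> 'k" and s t :: "'c \<Rightarrow> 'c"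
begin

(* W_t and W_s have dimension at least 4 and lie in the space of pure elements,
   which has dimension at most 7. *)
lemma common_W: "\<exists>w. w \<in> T.W \<and> w \<in> S.W \<and> w \<noteq> 0"
proof (rule nonzero_in_intersection[OF T.subspace_W S.subspace_W subspace_trace_zero])
  show "T.W \<subseteq> {x. tr x = 0}" using T.tr_W by blast
  show "S.W \<subseteq> {x. tr x = 0}" using S.tr_W by blast
  show "V.dim {x. tr x = 0} < V.dim T.W + V.dim S.W"
    using T.dim_W S.dim_W dim_trace_zero by linarith
qed

(* If the common vector w is
   isotropic, write w = d a1 with d \<in> D_s isotropic and adjust d by an element of
   D_s to reach any prescribed norm. *)
lemma matching_anisotropic: "\<exists>a a'. a \<in> T.W \<and> a' \<in> S.W \<and> N a \<noteq> 0 \<and> N a' = N a"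
proof -
  obtain w where w: "w \<in> T.W" "w \<in> S.W" "w \<noteq> 0" using common_W by blast
  show ?thesis
  proof (cases "N w = 0")
    case False
    then show ?thesis using w by blast
  next
    case True
    obtain a0 where a0: "a0 \<in> T.W" "N a0 \<noteq> 0" using T.anisotropic_in_W by blast
    obtain a1 where a1: "a1 \<in> S.W" "N a1 \<noteq> 0" using S.anisotropic_in_W by blast
    define d where "d = S.coord a1 w"
    have d_D: "d \<in> S.D" unfolding d_def using a1(1) by (rule S.coord_in)
    have "S.proj_D w = 0" using w(2) unfolding S.proj_D_def S.mem_W by simp
    then have w_d: "w = d \<odot> a1" using S.cayley_dickson_decomp[OF a1, of w] unfolding d_def by simp
    have N_d: "N d = 0" using True a1(2) norm_mult[of d a1] w_d by simp
    obtain z where z: "z \<in> S.D" "b d z \<noteq> 0"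
    proof (rule ccontr)
      assume "\<not> thesis"
      then have "\<And>z. z \<in> S.D \<Longrightarrow> b d z = 0" using that by blast
      then have "d = 0" using S.b_zero_if_orth_D[OF d_D] nondegenerate_b by blast
      then show False using w(3) w_d by simp
    qed
    define d' where "d' = ((N a0 / N a1 - N z) / b d z) \<star> d + z"
    have "d' \<in> S.D" unfolding d'_def using d_D z(1) by (intro S.D_add S.D_scale)
    then have "d' \<odot> a1 \<in> S.W" using a1(1) by (rule S.D_mult_W)
    moreover have "N d' = N a0 / N a1"
      unfolding d'_def using N_d z(2) by (simp add: norm_add field_simps b_sym[of z d])
    then have "N (d' \<odot> a1) = N a0" using a1(2) by (simp add: norm_mult)
    ultimately show ?thesis using a0 by blast
  qed
qed

lemma conjugate_if_fixed_subalgebras_iso: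
  assumes "alg_iso_on scale mult e T.D S.D f"
  shows "\<exists>g. is_aut scale mult g \<and> s = g \<circ> t \<circ> inv g"
proof -
  obtain a a' where "a \<in> T.W" "a' \<in> S.W" "N a \<noteq> 0" "N a' = N a"
    using matching_anisotropic by blast
  then interpret cayley_dickson_extension scale mult e N s t a a' f
    using assms by unfold_locales
  show ?thesis using g_aut g_conjugates by blast
qed

end

lemma involution_pair_of_order_two:
  fixes scale :: "'k::field \<Rightarrow> 'c::ab_group_add \<Rightarrow> 'c"
  assumes "(2::'k) \<noteq> 0" and "octonion_algebra scale mult e N"
    and "is_aut scale mult s" and "order_two s"
    and "is_aut scale mult t" and "order_two t"
  shows "involution_pair scale mult e N s t"
proof -
  note oa = assms(2)[unfolded octonion_algebra_def unital_algebra_def]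
  have aut: "Vector_Spaces.linear scale scale u \<and> (\<forall>x y. u (mult x y) = mult (u x) (u y)) \<and>
      (\<forall>x. u (u x) = x) \<and> (\<exists>x. u x \<noteq> x)"
    if "is_aut scale mult u" "order_two u" for u
    using that unfolding is_aut_def order_two_def by (auto simp: fun_eq_iff)
  have "\<exists>x::'c. x \<noteq> 0"
  proof -
    obtain x where "t x \<noteq> x" using aut[OF assms(5,6)] by blast
    moreover have "t 0 = 0"
      using aut[OF assms(5,6)] module_hom.zero[OF module_hom_linearI] by blast
    ultimately show ?thesis by metis
  qed
  then have "composition_algebra scale mult e N"
    unfolding composition_algebra_def using oa assms(1) by auto
  then have oct: "octonion scale mult e N"
    unfolding octonion_def octonion_axioms_def using oa by auto
  have "octonion_involution scale mult e N u" if "is_aut scale mult u" "order_two u" for u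
    unfolding octonion_involution_def algebra_involution_def algebra_involution_axioms_def
    using oct aut[OF that] octonion.axioms(1)[OF oct] by auto
  then show ?thesis unfolding involution_pair_def using oct assms(3-6) by blast
qed

theorem mainTheorem2:
  fixes scale :: "'k::field \<Rightarrow> 'c::ab_group_add \<Rightarrow> 'c"
    and mult :: "'c \<Rightarrow> 'c \<Rightarrow> 'c" and e :: 'c and N :: "'c \<Rightarrow> 'k"
    and s t :: "'c \<Rightarrow> 'c"
  assumes "(2::'k) \<noteq> 0"
    and "octonion_algebra scale mult e N"
    and "is_aut scale mult s" and "order_two s"
    and "is_aut scale mult t" and "order_two t"
  shows "(\<exists>g. is_aut scale mult g \<and> s = g \<circ> t \<circ> inv g) \<longleftrightarrow>
         (\<exists>f. alg_iso_on scale mult e (fixed_subalgebra t) (fixed_subalgebra s) f)"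
proof -
  interpret involution_pair scale mult e N s t
    using involution_pair_of_order_two[OF assms] .
  show ?thesis
  proof
    assume "\<exists>g. is_aut scale mult g \<and> s = g \<circ> t \<circ> inv g"
    then show "\<exists>f. alg_iso_on scale mult e (fixed_subalgebra t) (fixed_subalgebra s) f"
      using conjugate_fixed_subalgebras_iso[OF _ _ unit_left unit_right] by blast
  next
    assume "\<exists>f. alg_iso_on scale mult e (fixed_subalgebra t) (fixed_subalgebra s) f"
    then show "\<exists>g. is_aut scale mult g \<and> s = g \<circ> t \<circ> inv g"
      using conjugate_if_fixed_subalgebras_iso by blast
  qed
qed

end
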